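(* Let $R$ be a finite group and let $\varphi$ be an automorphism of $R$ with $|R:C_R(\varphi)|=3$. Then one of the following holds: (1) $\frac14\left(|R|+|\mathbf{I}(R)|+|C_R(\varphi)|+|C_R(\varphi)^{-1}|\right)\le \mathbf{c}(R)-\frac{|R|}{96}$; (2) $R$ is abelian of exponent greater than $2$ and $\varphi=\iota$.
   Context: $\mathbf{I}(R)=\{x\in R\mid x^2=1\}$, $\mathbf{c}(R)=(|R|+|\mathbf{I}(R)|)/2$. For an automorphism $\varphi$: $C_R(\varphi)=\{x\in R\mid x^\varphi=x\}$ and $C_R(\varphi)^{-1}=\{x\in R\mid x^\varphi=x^{-1}\}$. $\iota:R\to R$ is the map $x\mapsto x^{-1}$. *)

theory Defs
  imports "HOL-Algebra.Algebra"
begin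

definition invols :: "('a, 'b) monoid_scheme \<Rightarrow> 'a set" where
  "invols G = {x \<in> carrier G. x \<otimes>\<^bsub>G\<^esub> x = \<one>\<^bsub>G\<^esub>}"

definition cR :: "('a, 'b) monoid_scheme \<Rightarrow> real" where
  "cR G = (real (card (carrier G)) + real (card (invols G))) / 2"

definition fixC :: "('a, 'b) monoid_scheme \<Rightarrow> ('a \<Rightarrow> 'a) \<Rightarrow> 'a set" where
  "fixC G \<phi> = {x \<in> carrier G. \<phi> x = x}"

definition invC :: "('a, 'b) monoid_scheme \<Rightarrow> ('a \<Rightarrow> 'a) \<Rightarrow> 'a set" where
  "invC G \<phi> = {x \<in> carrier G. \<phi> x = inv\<^bsub>G\<^esub> x}"

definition group_exponent :: "('a, 'b) monoid_scheme \<Rightarrow> nat" where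
  "group_exponent G = Lcm (group.ord G ` carrier G)"

end

theory Submission
  imports Defs
begin

text \<open>Write \<open>C\<close> for \<open>C\<^sub>R(\<phi>)\<close> and \<open>V\<close> for \<open>C\<^sub>R(\<phi>)\<inverse>\<close>. If (1) fails, then, since \<open>V \<inter> C \<subseteq> I(R)\<close>,
  counting gives \<open>|V - C| > 15|C|/8\<close>, so each coset \<open>gC \<noteq> C\<close> meets \<open>V\<close> in more than \<open>7|C|/8\<close>
  elements. For \<open>v \<in> V \<inter> gC\<close>, conjugation by \<open>v\<close> inverts exactly those \<open>c \<in> C\<close> with
  \<open>vc \<in> V\<close>; a homomorphism inverting more than three quarters of a finite group inverts all
  of it, so \<open>gC \<subseteq> V\<close>: \<open>\<phi>\<close> inverts every element outside \<open>C\<close>. Then every \<open>g \<notin> C\<close> inverts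
  \<open>C\<close> by conjugation, and as \<open>C\<close> has index 3 there are \<open>g, h \<notin> C\<close> with \<open>gh \<notin> C\<close>; conjugating
  by \<open>gh\<close> shows that \<open>C\<close> has exponent 2, so \<open>\<phi> = \<iota>\<close>. Inversion being an automorphism, \<open>R\<close>
  is abelian, and any element outside \<open>C\<close> has order greater than 2.\<close>

text \<open>\<open><#\<close> is also ASCII syntax for strict multiset inclusion; keep it for left cosets only.\<close>
no_notation (ASCII) subset_mset (infix \<open><#\<close> 50)

lemma card_add_le_card_Int:
  assumes "finite U" "A \<subseteq> U" "B \<subseteq> U"
  shows "card A + card B \<le> card U + card (A \<inter> B)"
proof -
  have "card A + card B = card (A \<union> B) + card (A \<inter> B)"
    using assms by (intro card_Un_Int) (auto intro: finite_subset)
  also have "card (A \<union> B) \<le> card U"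
    using assms by (intro card_mono) auto
  finally show ?thesis by simp
qed

context group begin

lemma mult_inv_cancel_left [simp]:
  "x \<in> carrier G \<Longrightarrow> y \<in> carrier G \<Longrightarrow> x \<otimes> (inv x \<otimes> y) = y"
  by (simp flip: m_assoc)

lemma inv_mult_cancel_left [simp]:
  "x \<in> carrier G \<Longrightarrow> y \<in> carrier G \<Longrightarrow> inv x \<otimes> (x \<otimes> y) = y"
  by (simp flip: m_assoc)

lemma subgroup_eq_if_card_less_double:
  assumes H: "subgroup H G" and K: "subgroup K G" and "H \<subseteq> K" "finite K"
    and less: "card K < 2 * card H"
  shows "H = K"
proof -
  interpret K: group "G\<lparr>carrier := K\<rparr>"
    using K subgroup.subgroup_is_group is_group by blast
  have "card H dvd card K"
    using K.lagrange[OF subgroup_incl[OF H K \<open>H \<subseteq> K\<close>]] by (simp add: order_def) (metis dvd_triv_right)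
  then obtain k where k: "card K = card H * k" by blast
  have "card H \<le> card K" using \<open>H \<subseteq> K\<close> \<open>finite K\<close> by (rule card_mono[rotated])
  moreover have "card H > 0"
    using subgroup.one_closed[OF H] \<open>H \<subseteq> K\<close> \<open>finite K\<close> card_gt_0_iff finite_subset by blast
  ultimately have "k = 1" using k less by (cases k) auto
  then show ?thesis using k \<open>H \<subseteq> K\<close> \<open>finite K\<close> by (simp add: card_subset_eq)
qed

lemma subgroup_centralizer_Int:
  assumes C: "subgroup C G" and t: "t \<in> carrier G"
  shows "subgroup {s \<in> C. t \<otimes> s = s \<otimes> t} G"
proof (rule subgroupI)
  let ?Z = "{s \<in> C. t \<otimes> s = s \<otimes> t}"
  have CG: "C \<subseteq> carrier G" using subgroup.subset[OF C] .
  show "?Z \<subseteq> carrier G" using CG by auto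
  have "\<one> \<in> ?Z" using subgroup.one_closed[OF C] t by simp
  then show "?Z \<noteq> {}" by blast
  show "inv a \<in> ?Z" if "a \<in> ?Z" for a
  proof -
    have a: "a \<in> C" "t \<otimes> a = a \<otimes> t" and ac: "a \<in> carrier G" using that CG by auto
    have "inv a \<otimes> (t \<otimes> a) \<otimes> inv a = inv a \<otimes> (a \<otimes> t) \<otimes> inv a" using a by simp
    then have "t \<otimes> inv a = inv a \<otimes> t" using ac t by (simp add: m_assoc)
    then show ?thesis using subgroup.m_inv_closed[OF C a(1)] by simp
  qed
  show "a \<otimes> b \<in> ?Z" if "a \<in> ?Z" "b \<in> ?Z" for a b
  proof -
    have a: "a \<in> C" "t \<otimes> a = a \<otimes> t" and b: "b \<in> C" "t \<otimes> b = b \<otimes> t" using that by auto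
    then have ab: "a \<in> carrier G" "b \<in> carrier G" using CG by auto
    have "t \<otimes> (a \<otimes> b) = a \<otimes> (t \<otimes> b)" using a ab t by (simp flip: m_assoc)
    also have "\<dots> = (a \<otimes> b) \<otimes> t" using b ab t by (simp add: m_assoc)
    finally show ?thesis using subgroup.m_closed[OF C a(1) b(1)] by simp
  qed
qed

lemma inverted_elements_commute:
  assumes C: "subgroup C G" and \<alpha>: "\<alpha> \<in> hom (G\<lparr>carrier := C\<rparr>) G"
    and t: "t \<in> C" "\<alpha> t = inv t" and s: "s \<in> C" "\<alpha> s = inv s"
    and ts: "\<alpha> (t \<otimes> s) = inv (t \<otimes> s)"
  shows "t \<otimes> s = s \<otimes> t"
proof -
  have tc: "t \<in> carrier G" and sc: "s \<in> carrier G"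
    using t s subgroup.mem_carrier[OF C] by auto
  have "inv (s \<otimes> t) = inv (t \<otimes> s)"
    using hom_mult[OF \<alpha>, of t s] t s ts tc sc by (simp add: inv_mult_group)
  then show ?thesis using tc sc by (metis inv_inv m_closed)
qed

text \<open>With \<open>T\<close> the set of inverted elements, more than half of \<open>C\<close> lies in \<open>T \<inter> t\<inverse>T\<close>,
  which commutes with \<open>t\<close> by the previous lemma; so the centralizer of \<open>t\<close> in \<open>C\<close> is all of \<open>C\<close>.\<close>
lemma inverted_element_central:
  assumes C: "subgroup C G" "finite C" and \<alpha>: "\<alpha> \<in> hom (G\<lparr>carrier := C\<rparr>) G"
    and large: "3 * card C < 4 * card {c \<in> C. \<alpha> c = inv c}"
    and t: "t \<in> C" "\<alpha> t = inv t" and s: "s \<in> C"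
  shows "t \<otimes> s = s \<otimes> t"
proof -
  define T where "T = {c \<in> C. \<alpha> c = inv c}"
  define Z where "Z = {s \<in> C. t \<otimes> s = s \<otimes> t}"
  define B where "B = (\<otimes>) (inv t) ` T"
  have CG: "C \<subseteq> carrier G" using subgroup.subset[OF C(1)] .
  have TC: "T \<subseteq> C" by (auto simp: T_def)
  have tc: "t \<in> carrier G" using t CG by auto
  have "T \<inter> B \<subseteq> Z"
  proof
    fix s assume "s \<in> T \<inter> B"
    then obtain u where s: "s \<in> T" "u \<in> T" "s = inv t \<otimes> u" by (auto simp: B_def)
    then have "t \<otimes> s = u" using TC CG tc by auto
    then show "s \<in> Z" using inverted_elements_commute[OF C(1) \<alpha> t] s by (auto simp: T_def Z_def)
  qed
  moreover have "B \<subseteq> C"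
    using t TC C(1) by (auto simp: B_def intro: subgroup.m_closed subgroup.m_inv_closed)
  moreover have "card B = card T"
    unfolding B_def using TC CG tc by (intro card_image inj_on_g' inv_closed) auto
  ultimately have "2 * card T \<le> card C + card Z"
    using card_add_le_card_Int[OF C(2) TC, of B] card_mono[of Z "T \<inter> B"] C(2)
    by (simp add: Z_def)
  then have "Z = C"
    using subgroup_eq_if_card_less_double[OF subgroup_centralizer_Int[OF C(1) tc] C(1) _ C(2)] large
    by (auto simp: Z_def T_def)
  then show ?thesis using s by (auto simp: Z_def)
qed

lemma inverts_subgroup_if_inverts_over_three_quarters:
  assumes C: "subgroup C G" "finite C" and \<alpha>: "\<alpha> \<in> hom (G\<lparr>carrier := C\<rparr>) G"
    and large: "3 * card C < 4 * card {c \<in> C. \<alpha> c = inv c}"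
    and c: "c \<in> C"
  shows "\<alpha> c = inv c"
proof -
  define T where "T = {c \<in> C. \<alpha> c = inv c}"
  interpret \<alpha>: group_hom "G\<lparr>carrier := C\<rparr>" G \<alpha>
    using \<alpha> subgroup.subgroup_is_group[OF C(1) is_group]
    by (simp add: group_hom_def group_hom_axioms_def)
  have CG: "C \<subseteq> carrier G" using subgroup.subset[OF C(1)] .
  have "subgroup T G"
  proof (rule subgroupI)
    show "T \<subseteq> carrier G" using CG by (auto simp: T_def)
    have "\<one> \<in> T" using C(1) \<alpha>.hom_one by (simp add: T_def subgroup.one_closed)
    then show "T \<noteq> {}" by blast
    show "inv a \<in> T" if "a \<in> T" for a
      using that \<alpha>.hom_inv C(1) by (auto simp: T_def subgroup.m_inv_closed)
    show "a \<otimes> b \<in> T" if a: "a \<in> T" and b: "b \<in> T" for a b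
    proof -
      have "\<alpha> (a \<otimes> b) = inv a \<otimes> inv b" using a b hom_mult[OF \<alpha>] by (simp add: T_def)
      also have "\<dots> = inv (b \<otimes> a)" using a b CG by (subst inv_mult_group) (auto simp: T_def)
      also have "\<dots> = inv (a \<otimes> b)"
        using inverted_element_central[OF C \<alpha> large] a b by (simp add: T_def)
      finally show ?thesis using a b C(1) by (simp add: T_def subgroup.m_closed)
    qed
  qed
  then have "T = C" using subgroup_eq_if_card_less_double[OF _ C(1) _ C(2)] large
    by (simp add: T_def)
  then show ?thesis using c by (auto simp: T_def)
qed

lemma conjugation_hom_on_subgroup:
  assumes "H \<subseteq> carrier G" "g \<in> carrier G"
  shows "(\<lambda>h. inv g \<otimes> h \<otimes> g) \<in> hom (G\<lparr>carrier := H\<rparr>) G"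
  using assms by (intro homI) (auto simp: m_assoc subsetD)

lemma subgroup_fixC:
  assumes "\<phi> \<in> hom G G"
  shows "subgroup (fixC G \<phi>) G"
proof -
  interpret \<phi>: group_hom G G \<phi>
    using assms by (simp add: group_hom_def group_hom_axioms_def)
  show ?thesis
    by (rule subgroupI) (auto simp: fixC_def)
qed

lemma card_fixC_pos:
  assumes "\<phi> \<in> hom G G" "finite (carrier G)"
  shows "card (fixC G \<phi>) > 0"
proof -
  have "\<one> \<in> fixC G \<phi>" using subgroup.one_closed[OF subgroup_fixC[OF assms(1)]] .
  moreover have "finite (fixC G \<phi>)" using assms(2) by (simp add: fixC_def)
  ultimately show ?thesis using card_gt_0_iff by blast
qed

lemma invC_Int_fixC_subset_invols: "invC G \<phi> \<inter> fixC G \<phi> \<subseteq> invols G"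
  unfolding invC_def fixC_def invols_def by (auto dest: sym) (metis r_inv)

lemma mult_fixC_mem_invC_iff:
  assumes \<phi>: "\<phi> \<in> hom G G" and v: "v \<in> invC G \<phi>" and c: "c \<in> fixC G \<phi>"
  shows "v \<otimes> c \<in> invC G \<phi> \<longleftrightarrow> inv v \<otimes> c \<otimes> v = inv c"
proof -
  have vc: "v \<in> carrier G" "\<phi> v = inv v" "c \<in> carrier G" "\<phi> c = c"
    using v c by (auto simp: invC_def fixC_def)
  have "v \<otimes> c \<in> invC G \<phi> \<longleftrightarrow> inv v \<otimes> c = inv c \<otimes> inv v"
    using vc hom_mult[OF \<phi>] by (simp add: invC_def inv_mult_group)
  also have "\<dots> \<longleftrightarrow> inv v \<otimes> c \<otimes> v = inv c"
    using vc by (metis inv_closed inv_solve_right m_closed)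
  finally show ?thesis .
qed

lemma l_coset_fixC_subset_invC:
  assumes \<phi>: "\<phi> \<in> hom G G" and fin: "finite (carrier G)" and g: "g \<in> carrier G"
    and large: "3 * card (fixC G \<phi>) < 4 * card (invC G \<phi> \<inter> (g <# fixC G \<phi>))"
  shows "g <# fixC G \<phi> \<subseteq> invC G \<phi>"
proof -
  let ?C = "fixC G \<phi>" and ?V = "invC G \<phi>"
  have C: "subgroup ?C G" using subgroup_fixC[OF \<phi>] .
  have CG: "?C \<subseteq> carrier G" using C subgroup.subset by blast
  have finC: "finite ?C" using CG fin finite_subset by blast
  have "?V \<inter> (g <# ?C) \<noteq> {}" using large by auto
  then obtain v where v: "v \<in> ?V" "v \<in> g <# ?C" by blast
  have vc: "v \<in> carrier G" using v(1) by (simp add: invC_def)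
  have coset: "g <# ?C = v <# ?C" using l_repr_independence[OF v(2) g C] .
  define T where "T = {c \<in> ?C. v \<otimes> c \<in> ?V}"
  have "(\<otimes>) v ` T = ?V \<inter> (v <# ?C)" by (auto simp: T_def l_coset_def)
  moreover have "inj_on ((\<otimes>) v) T" using CG vc by (intro inj_on_g') (auto simp: T_def)
  ultimately have "card T = card (?V \<inter> (g <# ?C))" using coset by (metis card_image)
  moreover have T: "T = {c \<in> ?C. inv v \<otimes> c \<otimes> v = inv c}"
    using mult_fixC_mem_invC_iff[OF \<phi> v(1)] by (auto simp: T_def)
  ultimately have "inv v \<otimes> c \<otimes> v = inv c" if "c \<in> ?C" for c
    using inverts_subgroup_if_inverts_over_three_quarters[OF C finC
        conjugation_hom_on_subgroup[OF CG vc] _ that] large by simp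
  then have "v \<otimes> c \<in> ?V" if "c \<in> ?C" for c using that T by (auto simp: T_def)
  then show ?thesis using coset by (auto simp: l_coset_def)
qed

lemma l_coset_Int_subgroup_empty:
  assumes C: "subgroup C G" and g: "g \<in> carrier G" "g \<notin> C"
  shows "(g <# C) \<inter> C = {}"
proof -
  have "g \<in> C" if "g \<otimes> c \<in> C" "c \<in> C" for c
    using subgroup.m_closed[OF C that(1) subgroup.m_inv_closed[OF C that(2)]]
      g(1) subgroup.mem_carrier[OF C that(2)] by (simp add: m_assoc)
  then show ?thesis using g(2) unfolding l_coset_def by blast
qed

lemma exists_mult_notin_subgroup:
  assumes C: "subgroup C G" and fin: "finite (carrier G)" and small: "2 * card C < order G"
  obtains g h where "g \<in> carrier G" "h \<in> carrier G" "g \<notin> C" "h \<notin> C" "g \<otimes> h \<notin> C"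
proof -
  have CG: "C \<subseteq> carrier G" using C subgroup.subset by blast
  have "\<not> carrier G \<subseteq> C"
    using card_mono[OF finite_subset[OF CG fin], of "carrier G"] small by (auto simp: order_def)
  then obtain g where g: "g \<in> carrier G" "g \<notin> C" by blast
  have "inv g <# C \<in> lcosets C" using g(1) by (auto simp: LCOSETS_def)
  then have "card C = card (inv g <# C)" by (rule l_card_cosets_equal[OF _ CG fin])
  then have "card (C \<union> (inv g <# C)) < order G"
    using card_Un_le[of C "inv g <# C"] small by linarith
  moreover have "C \<union> (inv g <# C) \<subseteq> carrier G"
    using CG l_coset_subset_G[OF CG inv_closed[OF g(1)]] by blast
  ultimately have "\<not> carrier G \<subseteq> C \<union> (inv g <# C)"
    using card_mono[OF finite_subset[OF _ fin]] unfolding order_def by (metis not_le)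
  then obtain h where h: "h \<in> carrier G" "h \<notin> C" "h \<notin> inv g <# C" by blast
  have "g \<otimes> h \<notin> C"
  proof
    assume "g \<otimes> h \<in> C"
    then have "inv g \<otimes> (g \<otimes> h) \<in> inv g <# C" by (auto simp: l_coset_def)
    then show False using g h by simp
  qed
  then show thesis using that g h by blast
qed

lemma inverts_all_if_inverts_outside_fixC:
  assumes \<phi>: "\<phi> \<in> hom G G"
    and outside: "\<And>x. x \<in> carrier G \<Longrightarrow> x \<notin> fixC G \<phi> \<Longrightarrow> \<phi> x = inv x"
    and gh: "g \<in> carrier G" "h \<in> carrier G" "g \<notin> fixC G \<phi>" "h \<notin> fixC G \<phi>"
      "g \<otimes> h \<notin> fixC G \<phi>"
    and x: "x \<in> carrier G"
  shows "\<phi> x = inv x"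
proof -
  let ?C = "fixC G \<phi>"
  have C: "subgroup ?C G" using subgroup_fixC[OF \<phi>] .
  have conj: "inv a \<otimes> c \<otimes> a = inv c" if a: "a \<in> carrier G" "a \<notin> ?C" and c: "c \<in> ?C" for a c
  proof -
    have cc: "c \<in> carrier G" using subgroup.mem_carrier[OF C c] .
    have "a \<otimes> c \<notin> ?C"
    proof
      assume "a \<otimes> c \<in> ?C"
      then have "a \<otimes> c \<otimes> inv c \<in> ?C"
        by (rule subgroup.m_closed[OF C _ subgroup.m_inv_closed[OF C c]])
      then show False using a cc by (simp add: m_assoc)
    qed
    then have "a \<otimes> c \<in> invC G \<phi>" using outside[of "a \<otimes> c"] a cc by (simp add: invC_def)
    moreover have "a \<in> invC G \<phi>" using outside[of a] a by (simp add: invC_def)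
    ultimately show ?thesis using mult_fixC_mem_invC_iff[OF \<phi> _ c] by blast
  qed
  have self_inverse: "c = inv c" if c: "c \<in> ?C" for c
  proof -
    have cc: "c \<in> carrier G" using subgroup.mem_carrier[OF C c] .
    have "inv c = inv (g \<otimes> h) \<otimes> c \<otimes> (g \<otimes> h)" using conj gh c by simp
    also have "\<dots> = inv h \<otimes> (inv g \<otimes> c \<otimes> g) \<otimes> h"
      using gh cc by (simp add: m_assoc inv_mult_group)
    also have "\<dots> = inv h \<otimes> inv c \<otimes> h" using conj gh c by simp
    also have "\<dots> = inv (inv h \<otimes> c \<otimes> h)" using gh cc by (simp add: m_assoc inv_mult_group)
    also have "\<dots> = c" using conj gh c cc by simp
    finally show ?thesis by simp
  qed
  show ?thesis
  proof (cases "x \<in> ?C")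
    case True
    then show ?thesis using self_inverse by (auto simp: fixC_def)
  qed (use outside x in blast)
qed

lemma comm_group_if_inverse_hom:
  assumes "\<phi> \<in> hom G G" "\<And>x. x \<in> carrier G \<Longrightarrow> \<phi> x = inv x"
  shows "comm_group G"
proof (rule group_comm_groupI)
  fix x y assume xy: "x \<in> carrier G" "y \<in> carrier G"
  have "inv (x \<otimes> y) = inv x \<otimes> inv y" using assms xy hom_mult by fastforce
  then have "inv (x \<otimes> y) = inv (y \<otimes> x)" using xy by (simp add: inv_mult_group)
  then show "x \<otimes> y = y \<otimes> x" using xy by (metis inv_inv m_closed)
qed

lemma group_exponent_gt_2:
  assumes fin: "finite (carrier G)" and x: "x \<in> carrier G" "x \<otimes> x \<noteq> \<one>"
  shows "group_exponent G > 2"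
proof (rule ccontr)
  assume "\<not> group_exponent G > 2"
  moreover have "0 \<notin> ord ` carrier G" using ord_ge_1[OF fin] by (metis imageE not_one_le_zero)
  then have "group_exponent G \<noteq> 0" using fin by (simp add: group_exponent_def)
  ultimately have "group_exponent G = 1 \<or> group_exponent G = 2" by linarith
  then have "group_exponent G dvd 2" by auto
  moreover have "ord x dvd group_exponent G" using x by (simp add: group_exponent_def)
  ultimately have "x [^] (2::nat) = \<one>" using x dvd_trans pow_eq_id by blast
  then show False using x by (simp add: numeral_2_eq_2)
qed

lemma inverts_all_if_invC_large:
  assumes \<phi>: "\<phi> \<in> hom G G" and fin: "finite (carrier G)"
    and index: "card (carrier G) = 3 * card (fixC G \<phi>)"
    and many: "15 * card (fixC G \<phi>) < 8 * card (invC G \<phi> - fixC G \<phi>)"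
    and x: "x \<in> carrier G"
  shows "\<phi> x = inv x"
proof -
  let ?C = "fixC G \<phi>" and ?V = "invC G \<phi>"
  have C: "subgroup ?C G" using subgroup_fixC[OF \<phi>] .
  have CG: "?C \<subseteq> carrier G" using subgroup.subset[OF C] .
  have finC: "finite ?C" using finite_subset[OF CG fin] .
  have outside: "\<phi> g = inv g" if g: "g \<in> carrier G" "g \<notin> ?C" for g
  proof -
    have "g <# ?C \<in> lcosets ?C" using g(1) by (auto simp: LCOSETS_def)
    then have card_coset: "card ?C = card (g <# ?C)" by (rule l_card_cosets_equal[OF _ CG fin])
    have coset_outside: "g <# ?C \<subseteq> carrier G - ?C"
      using l_coset_subset_G[OF CG g(1)] l_coset_Int_subgroup_empty[OF C g] by blast
    have "card (carrier G - ?C) = 2 * card ?C"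
      using index by (simp add: card_Diff_subset[OF finC CG])
    moreover have "?V - ?C \<subseteq> carrier G - ?C" by (auto simp: invC_def)
    ultimately have "card (?V - ?C) + card (g <# ?C) \<le> 2 * card ?C + card ((?V - ?C) \<inter> (g <# ?C))"
      using card_add_le_card_Int[OF _ _ coset_outside] fin by simp
    moreover have "card ((?V - ?C) \<inter> (g <# ?C)) \<le> card (?V \<inter> (g <# ?C))"
      using fin by (intro card_mono) (auto simp: invC_def)
    ultimately have "3 * card ?C < 4 * card (?V \<inter> (g <# ?C))"
      using many card_coset by linarith
    then have "g <# ?C \<subseteq> ?V" by (rule l_coset_fixC_subset_invC[OF \<phi> fin g(1)])
    then show ?thesis using lcos_self[OF g(1) C] by (auto simp: invC_def)
  qed
  have "2 * card ?C < order G" using index card_fixC_pos[OF \<phi> fin] unfolding order_def by linarith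
  then obtain g h where "g \<in> carrier G" "h \<in> carrier G" "g \<notin> ?C" "h \<notin> ?C" "g \<otimes> h \<notin> ?C"
    using exists_mult_notin_subgroup[OF C fin] by blast
  then show ?thesis using inverts_all_if_inverts_outside_fixC[OF \<phi> outside _ _ _ _ _ x] by blast
qed

lemma average_le_cR_if_invC_small:
  assumes fin: "finite (carrier G)"
    and index: "card (carrier G) = 3 * card (fixC G \<phi>)"
    and few: "8 * card (invC G \<phi> - fixC G \<phi>) \<le> 15 * card (fixC G \<phi>)"
  shows "(real (card (carrier G)) + real (card (invols G)) + real (card (fixC G \<phi>))
            + real (card (invC G \<phi>))) / 4 \<le> cR G - real (card (carrier G)) / 96"
proof -
  have finV: "finite (invC G \<phi>)" and finI: "finite (invols G)"
    using fin by (auto simp: invC_def invols_def)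
  have "card (invC G \<phi>) = card (invC G \<phi> \<inter> fixC G \<phi>) + card (invC G \<phi> - fixC G \<phi>)"
    using card_Int_Diff[OF finV] .
  moreover have "card (invC G \<phi> \<inter> fixC G \<phi>) \<le> card (invols G)"
    using card_mono[OF finI invC_Int_fixC_subset_invols] .
  ultimately have "24 * card (invC G \<phi>) \<le> 15 * card (carrier G) + 24 * card (invols G)"
    using few index by linarith
  then have "24 * real (card (invC G \<phi>)) \<le> 15 * real (card (carrier G)) + 24 * real (card (invols G))"
    by linarith
  moreover have "real (card (carrier G)) = 3 * real (card (fixC G \<phi>))" using index by simp
  ultimately show ?thesis unfolding cR_def by (simp add: field_simps)
qed

end

theorem lemma2p3:
  fixes R :: "('a, 'b) monoid_scheme" and \<phi> :: "'a \<Rightarrow> 'a"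
  assumes "group R" and "finite (carrier R)"
    and "\<phi> \<in> iso R R"
    and "card (carrier R) = 3 * card (fixC R \<phi>)"
  shows "(real (card (carrier R)) + real (card (invols R)) + real (card (fixC R \<phi>))
            + real (card (invC R \<phi>))) / 4 \<le> cR R - real (card (carrier R)) / 96
         \<or> (comm_group R \<and> group_exponent R > 2 \<and> (\<forall>x \<in> carrier R. \<phi> x = inv\<^bsub>R\<^esub> x))"
proof (cases "15 * card (fixC R \<phi>) < 8 * card (invC R \<phi> - fixC R \<phi>)")
  case False
  then show ?thesis using group.average_le_cR_if_invC_small[OF assms(1,2,4)] by simp
next
  case True
  interpret group R by fact
  have hom: "\<phi> \<in> hom R R" using assms(3) by (rule iso_imp_homomorphism)
  have inverse: "\<phi> x = inv\<^bsub>R\<^esub> x" if "x \<in> carrier R" for x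
    using inverts_all_if_invC_large[OF hom assms(2,4) True that] .
  have "fixC R \<phi> \<noteq> carrier R" using assms(4) card_fixC_pos[OF hom assms(2)] by auto
  then obtain x where x: "x \<in> carrier R" "x \<notin> fixC R \<phi>" by (auto simp: fixC_def)
  have "x \<otimes>\<^bsub>R\<^esub> x \<noteq> \<one>\<^bsub>R\<^esub>"
  proof
    assume "x \<otimes>\<^bsub>R\<^esub> x = \<one>\<^bsub>R\<^esub>"
    then have "\<phi> x = x" using inverse[OF x(1)] inv_equality x(1) by simp
    then show False using x by (simp add: fixC_def)
  qed
  then show ?thesis
    using comm_group_if_inverse_hom[OF hom inverse] group_exponent_gt_2[OF assms(2) x(1)] inverse
    by blast
qed

end
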